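(* Fix $n\in\mathbb N$, a noise level $\varepsilon\in[0,1)$, a horizon $K$ and a target risk level $\bar q\in[0,1]$. Let $G=(\mathcal V,\mathcal E)$ be a graph with $|\mathcal V|=n$ and minimum degree $\underline\Delta_G=\min_v|\mathcal N(v)|$. Under the Water-Filling Strategy $\psi^{wf}_{\bar q}$, $$\mathbb P(T_{IH}\ne T)\le1-\left(1-\frac1{\underline\Delta_G}\right)^K.$$
   Context: Model: finite connected undirected graph, neighborhoods $\mathcal N(v)$; goal $D$ uniform; fixed initial vertex; $B_t$ i.i.d. Bernoulli$(1-\varepsilon)$. The agent in state $X_t$ chooses $a_t\in\mathcal N(X_t)$; if $B_t=1$, $X_{t+1}=a_t$, else uniform on $\mathcal N(X_t)$. $T=\inf\{t\ge1:X_t=D\}$; if not reached by $K$, set $X_{K+1}=D$, $B_K=1$. Random-Step: $a_t$ uniform on $\mathcal N(X_t)$; Goal-Attempt: $a_t=D$ (only if $D\in\mathcal N(X_t)$). $T_{IH}=\inf\{t\ge1:$ Goal-Attempt at $t-1$ and $B_{t-1}=1\}$ ($\le K+1$). $L(t)=\sum_{s\le t}\mathbb I(X_s\in\mathcal N(D))$. Water-Filling Strategy $\psi^{wf}_{\bar q}$: $t^*=\lceil1/\bar q-\varepsilon/(1-\varepsilon)\rceil$ (integer argument assumed), $p_t=\frac{\bar q}{1-\varepsilon}(1-t\bar q)^{-1}$ for $0\le t<t^*-1$, else $1$; if $X_t\in\mathcal N(D)$ and $T_{IH}>t$, Goal-Attempt with probability $p_{L(t)}$, else Random-Step; otherwise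 Random-Step. *)

theory Defs
  imports "HOL-Probability.Probability"
begin

definition graph_conn :: "'v set \<Rightarrow> ('v \<Rightarrow> 'v set) \<Rightarrow> bool" where
  "graph_conn V N \<longleftrightarrow> finite V
     \<and> (\<forall>v\<in>V. N v \<subseteq> V)
     \<and> (\<forall>u\<in>V. \<forall>v\<in>V. v \<in> N u \<longleftrightarrow> u \<in> N v)
     \<and> (\<forall>v\<in>V. v \<notin> N v)
     \<and> (\<forall>u\<in>V. \<forall>v\<in>V. (u, v) \<in> {(a, b). b \<in> N a}\<^sup>*)"

definition min_degree :: "'v set \<Rightarrow> ('v \<Rightarrow> 'v set) \<Rightarrow> nat" where
  "min_degree V N = Min ((\<lambda>v. card (N v)) ` V)"

definition wf_tstar :: "real \<Rightarrow> real \<Rightarrow> int" where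
  "wf_tstar q eps = \<lceil>1 / q - eps / (1 - eps)\<rceil>"

text \<open>Water-filling attempt probabilities p_t. For q = 0 we have t* = infinity and p_t = 0.\<close>
definition wf_p :: "real \<Rightarrow> real \<Rightarrow> nat \<Rightarrow> real" where
  "wf_p q eps t = (if q = 0 then 0
     else if real t < real_of_int (wf_tstar q eps) - 1
          then q / (1 - eps) * inverse (1 - real t * q) else 1)"

text \<open>One step from vertex x with visit count L = L(t): returns the next vertex X_{t+1}
  and whether the step was a Goal-Attempt with B_t = 1.\<close>
definition wf_step :: "('v \<Rightarrow> 'v set) \<Rightarrow> real \<Rightarrow> real \<Rightarrow> 'v \<Rightarrow> nat \<Rightarrow> 'v \<Rightarrow> ('v \<times> bool) pmf" where
  "wf_step N eps q D L x =
     bind_pmf (if x \<in> N D then bernoulli_pmf (wf_p q eps L) else return_pmf False) (\<lambda>ga.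
     bind_pmf (bernoulli_pmf (1 - eps)) (\<lambda>B.
       if ga then
         (if B then return_pmf (D, True) else map_pmf (\<lambda>y. (y, False)) (pmf_of_set (N x)))
       else
         bind_pmf (pmf_of_set (N x)) (\<lambda>a.
           if B then return_pmf (a, False) else map_pmf (\<lambda>y. (y, False)) (pmf_of_set (N x)))))"

text \<open>wf_run N eps q D m x L: distribution of the indicator of the event T_IH \<noteq> T, when m steps
  remain before the horizon, the current vertex is x (not yet at the goal after time 0) and the
  current count is L. If the horizon is exhausted, truncation forces a successful step into D,
  so T_IH = T = K+1.\<close>
fun wf_run :: "('v \<Rightarrow> 'v set) \<Rightarrow> real \<Rightarrow> real \<Rightarrow> 'v \<Rightarrow> nat \<Rightarrow> 'v \<Rightarrow> nat \<Rightarrow> bool pmf" where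
  "wf_run N eps q D 0 x L = return_pmf False"
| "wf_run N eps q D (Suc m) x L =
     bind_pmf (wf_step N eps q D L x) (\<lambda>(y, s).
       if y = D then return_pmf (\<not> s)
       else wf_run N eps q D m y (L + (if y \<in> N D then 1 else 0)))"

definition wf_fail_prob :: "'v set \<Rightarrow> ('v \<Rightarrow> 'v set) \<Rightarrow> 'v \<Rightarrow> real \<Rightarrow> real \<Rightarrow> nat \<Rightarrow> real" where
  "wf_fail_prob V N x0 eps q K =
     pmf (bind_pmf (pmf_of_set V)
            (\<lambda>D. wf_run N eps q D K x0 (if x0 \<in> N D then 1 else 0))) True"

end

theory Submission
  imports Defs
begin

text \<open>
  The bound does not depend on the attempt probabilities at all. The event \<open>T\<^sub>I\<^sub>H \<noteq> T\<close> requires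
  that the walk enters \<open>D\<close> by a uniform move to a neighbour (a Random-Step, or the noise of an
  attempt), and from \<open>x\<close> such a move hits \<open>D\<close> with probability at most
  \<open>1 / |N(x)| \<le> 1 / \<Delta>\<close>, where \<open>\<Delta>\<close> is the minimum degree. Conditioning on the first step and
  inducting on the number of remaining steps gives the bound \<open>1 - (1 - 1/\<Delta>)\<^sup>m\<close>.
\<close>

lemma pmf_bind_le_const:
  assumes "\<And>x. x \<in> set_pmf M \<Longrightarrow> pmf (f x) i \<le> c"
  shows "pmf (bind_pmf M f) i \<le> c"
  unfolding pmf_bind
proof (rule measure_pmf.integral_le_const)
  show "integrable M (\<lambda>x. pmf (f x) i)"
    by (rule measure_pmf.integrable_const_bound[where B = 1]) (auto simp: pmf_le_1)
  show "AE x in M. pmf (f x) i \<le> c"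
    using assms by (simp add: AE_measure_pmf_iff)
qed

lemma pmf_bind_le_except_point:
  fixes g :: real
  assumes "\<And>x. x \<in> set_pmf M \<Longrightarrow> x \<noteq> a \<Longrightarrow> pmf (f x) i \<le> g"
  shows "pmf (bind_pmf M f) i \<le> g + (1 - g) * pmf M a"
proof -
  have bounded: "integrable M (\<lambda>x. g + (1 - g) * indicator {a} x)"
    by (rule measure_pmf.integrable_const_bound[where B = "\<bar>g\<bar> + \<bar>1 - g\<bar>"])
       (auto simp: indicator_def)
  have "pmf (bind_pmf M f) i = (\<integral>x. pmf (f x) i \<partial>M)"
    by (rule pmf_bind)
  also have "\<dots> \<le> (\<integral>x. g + (1 - g) * indicator {a} x \<partial>M)"
  proof (rule integral_mono_AE[OF _ bounded])
    show "integrable M (\<lambda>x. pmf (f x) i)"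
      by (rule measure_pmf.integrable_const_bound[where B = 1]) (auto simp: pmf_le_1)
    show "AE x in M. pmf (f x) i \<le> g + (1 - g) * indicator {a} x"
      using assms by (auto simp: AE_measure_pmf_iff indicator_def pmf_le_1)
  qed
  also have "\<dots> = g + (1 - g) * pmf M a"
    by (simp add: measure_pmf.emeasure_eq_measure measure_pmf_single)
  finally show ?thesis .
qed

lemma pmf_wf_step_missed_goal:
  assumes "finite (N x)" "N x \<noteq> {}"
  shows "pmf (wf_step N eps q D L x) (D, False) \<le> 1 / card (N x)"
proof -
  have "pmf (map_pmf (\<lambda>y. (y, False)) (pmf_of_set (N x))) (D, False) = pmf (pmf_of_set (N x)) D"
    by (rule pmf_map_inj') (auto intro: injI)
  then have uniform: "pmf (map_pmf (\<lambda>y. (y, False)) (pmf_of_set (N x))) (D, False) \<le> 1 / card (N x)"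
    using assms by (simp add: indicator_def)
  then have "pmf (bind_pmf (pmf_of_set (N x)) (\<lambda>a. if B then return_pmf (a, False)
               else map_pmf (\<lambda>y. (y, False)) (pmf_of_set (N x)))) (D, False) \<le> 1 / card (N x)" for B
    by (cases B) (simp_all add: map_pmf_def)
  with uniform show ?thesis
    unfolding wf_step_def by (auto intro!: pmf_bind_le_const)
qed

lemma set_pmf_wf_step_subset:
  assumes "finite (N x)" "N x \<noteq> {}"
  shows "fst ` set_pmf (wf_step N eps q D L x) \<subseteq> insert D (N x)"
proof -
  have "set_pmf (pmf_of_set (N x)) = N x"
    using assms by simp
  then show ?thesis
    unfolding wf_step_def by (auto simp: set_bind_pmf split: if_splits)
qed

lemma pmf_wf_run_le:
  fixes d :: nat
  assumes closed: "\<forall>v\<in>V. N v \<subseteq> V" and deg: "\<forall>v\<in>V. d \<le> card (N v)" and "0 < d"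
    and "x \<in> V"
  shows "pmf (wf_run N eps q D m x L) True \<le> 1 - (1 - 1 / d) ^ m"
  using \<open>x \<in> V\<close>
proof (induction m arbitrary: x L)
  case 0
  then show ?case by simp
next
  case (Suc m)
  define g where "g = 1 - (1 - 1 / real d) ^ m"
  have "1 / real d \<le> 1"
    using \<open>0 < d\<close> by simp
  then have g_bounds: "0 \<le> g" "g \<le> 1"
    unfolding g_def by (simp_all add: power_le_one)
  have "card (N x) \<noteq> 0"
    using deg Suc.prems \<open>0 < d\<close> by fastforce
  then have nbrs: "finite (N x)" "N x \<noteq> {}"
    by (simp_all add: card_eq_0_iff)
  have "pmf (wf_run N eps q D (Suc m) x L) True \<le> g + (1 - g) * pmf (wf_step N eps q D L x) (D, False)"
    unfolding wf_run.simps
  proof (rule pmf_bind_le_except_point)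
    fix z
    assume step: "z \<in> set_pmf (wf_step N eps q D L x)" and missed: "z \<noteq> (D, False)"
    obtain y s where z: "z = (y, s)"
      by fastforce
    show "pmf (case z of (y, s) \<Rightarrow> if y = D then return_pmf (\<not> s)
               else wf_run N eps q D m y (L + (if y \<in> N D then 1 else 0))) True \<le> g"
    proof (cases "y = D")
      case True
      then show ?thesis
        using z missed g_bounds by simp
    next
      case False
      with set_pmf_wf_step_subset[of N x, OF nbrs] step z have "y \<in> V"
        using closed Suc.prems by force
      with z False Suc.IH show ?thesis
        unfolding g_def by simp
    qed
  qed
  also have "\<dots> \<le> g + (1 - g) * (1 / d)"
  proof -
    have "pmf (wf_step N eps q D L x) (D, False) \<le> 1 / card (N x)"
      using nbrs by (rule pmf_wf_step_missed_goal)
    also have "\<dots> \<le> 1 / d"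
      using deg Suc.prems \<open>0 < d\<close> by (intro divide_left_mono) auto
    finally show ?thesis
      using g_bounds by (intro add_left_mono mult_left_mono) auto
  qed
  also have "\<dots> = 1 - (1 - 1 / d) ^ Suc m"
    unfolding g_def by (simp add: algebra_simps)
  finally show ?case .
qed

lemma graph_conn_neighbours_nonempty:
  assumes "graph_conn V N" "2 \<le> card V" "v \<in> V"
  shows "N v \<noteq> {}"
proof
  assume isolated: "N v = {}"
  have "V \<subseteq> {v}"
  proof
    fix u
    assume "u \<in> V"
    then have "(v, u) \<in> {(a, b). b \<in> N a}\<^sup>*"
      using assms(1,3) unfolding graph_conn_def by blast
    then show "u \<in> {v}"
      using isolated by (cases rule: converse_rtranclE) auto
  qed
  then have "card V \<le> 1"
    using card_mono[of "{v}" V] by simp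
  with assms(2) show False
    by simp
qed

lemma min_degree_le:
  "finite V \<Longrightarrow> v \<in> V \<Longrightarrow> min_degree V N \<le> card (N v)"
  unfolding min_degree_def by simp

lemma min_degree_pos:
  assumes "graph_conn V N" "2 \<le> card V"
  shows "0 < min_degree V N"
proof -
  have "finite V" "V \<noteq> {}" and closed: "\<forall>v\<in>V. N v \<subseteq> V"
    using assms unfolding graph_conn_def by auto
  then have "min_degree V N \<in> (\<lambda>v. card (N v)) ` V"
    unfolding min_degree_def by (intro Min_in) auto
  then obtain v where "v \<in> V" "min_degree V N = card (N v)"
    by blast
  moreover have "finite (N v)"
    using \<open>finite V\<close> closed \<open>v \<in> V\<close> finite_subset by blast
  ultimately show ?thesis
    using graph_conn_neighbours_nonempty[OF assms] by (simp add: card_gt_0_iff)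
qed

theorem lemma5:
  fixes V :: "'v set" and N :: "'v \<Rightarrow> 'v set" and x0 :: 'v
    and n K :: nat and eps q :: real
  assumes "graph_conn V N" and "card V = n" and "n \<ge> 2" and "x0 \<in> V"
    and "0 \<le> eps" and "eps < 1" and "0 \<le> q" and "q \<le> 1"
    and "q > 0 \<longrightarrow> 1 / q - eps / (1 - eps) \<in> \<int>"
  shows "wf_fail_prob V N x0 eps q K \<le> 1 - (1 - 1 / real (min_degree V N)) ^ K"
proof -
  have "finite V" and closed: "\<forall>v\<in>V. N v \<subseteq> V"
    using assms(1) unfolding graph_conn_def by auto
  then have deg: "\<forall>v\<in>V. min_degree V N \<le> card (N v)"
    by (simp add: min_degree_le)
  have "0 < min_degree V N"
    using min_degree_pos assms(1-3) by blast
  then show ?thesis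
    unfolding wf_fail_prob_def
    by (intro pmf_bind_le_const pmf_wf_run_le[OF closed deg _ \<open>x0 \<in> V\<close>])
qed

end
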